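(* Let $f:(M,g_M)\to(N,g_N)$ be a smooth map between Riemannian manifolds. Then $f$ is a conformal Riemannian morphism if and only if there exist a smooth function $\wedge_f:M\to\mathbb{R}^{+}$ and, for each $x\in M$, a linear subspace $H_x\subset T_xM$ with $T_xM=H_x\oplus\ker(df_x)$, such that $P_{H_x}\circ P_{H_x}=\wedge_f(x)\,P_{H_x}$ for all $x\in M$.
   Context: A linear map $T:V\to W$ between real inner-product spaces is a geometric function if there exist a subspace $C\subset V$ with $V=\ker T\oplus C$ and $r>0$ with $\langle T u,T v\rangle=r\langle u,v\rangle$ for all $u,v\in C$ ($r$ is a conformality factor). A smooth $f:(M,g_M)\to(N,g_N)$ is a conformal Riemannian morphism if there is a smooth $\wedge_f:M\to\mathbb{R}^{+}$ such that each $df_x$ is a geometric function with conformality factor $\wedge_f(x)$. For a subspace $H_x\subset T_xM$ with $H_x\oplus\ker(df_x)=T_xM$, define the linear map $(df_{H_x})^{\diamond}:T_{f(x)}N\to T_xM$ by $(df_{H_x})^{\diamond}(X)=((df_x)|_{H_x})^{*}(X)$ if $X\in\mathrm{range}(df_x)$ and $(df_{H_x})^{\diamond}(X)=0$ if $X\in\mathrm{range}(df_x)^{\perp}$, where $((df_x)|_{H_x})^{*}$ is the adjoint of $(df_x)|_{H_x}:H_x\to\mathrm{range}(df_x)$ with respect to $g_M(x)$ and $g_N(f(x))$. Set $P_{H_x}=(df_{H_x})^{\diamond}\circ df_x:T_xM\to T_xM$. *)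

theory Defs
  imports "HOL-Analysis.Analysis"
begin

definition inner_product_form :: "('a::real_vector \<Rightarrow> 'a \<Rightarrow> real) \<Rightarrow> bool" where
  "inner_product_form g \<longleftrightarrow> bilinear g \<and> (\<forall>u v. g u v = g v u) \<and> (\<forall>v. v \<noteq> 0 \<longrightarrow> g v v > 0)"

definition ker :: "('a::real_vector \<Rightarrow> 'b::real_vector) \<Rightarrow> 'a set" where
  "ker T = {v. T v = 0}"

definition direct_sum_decomp :: "'a::real_vector set \<Rightarrow> 'a set \<Rightarrow> bool" where
  "direct_sum_decomp A B \<longleftrightarrow> subspace A \<and> subspace B \<and> A \<inter> B = {0}
     \<and> {a + b | a b. a \<in> A \<and> b \<in> B} = UNIV"

definition geometric_function ::
  "('a::real_vector \<Rightarrow> 'a \<Rightarrow> real) \<Rightarrow> ('b::real_vector \<Rightarrow> 'b \<Rightarrow> real) \<Rightarrow> ('a \<Rightarrow> 'b) \<Rightarrow> real \<Rightarrow> bool" where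
  "geometric_function gV gW T r \<longleftrightarrow> linear T \<and> r > 0 \<and>
     (\<exists>C. direct_sum_decomp (ker T) C \<and> (\<forall>u\<in>C. \<forall>v\<in>C. gW (T u) (T v) = r * gV u v))"

definition restr_adjoint ::
  "('a::real_vector \<Rightarrow> 'a \<Rightarrow> real) \<Rightarrow> ('b::real_vector \<Rightarrow> 'b \<Rightarrow> real) \<Rightarrow> ('a \<Rightarrow> 'b) \<Rightarrow> 'a set \<Rightarrow> 'b \<Rightarrow> 'a" where
  "restr_adjoint gV gW T H y = (THE h. h \<in> H \<and> (\<forall>v\<in>H. gV h v = gW y (T v)))"

text \<open>The map (dT_H)^diamond: equal to the restricted adjoint on range T and to 0 on
  the gW-orthogonal complement of range T, extended linearly (i.e. applied to the
  gW-orthogonal projection of X onto range T).\<close>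
definition diamond ::
  "('a::real_vector \<Rightarrow> 'a \<Rightarrow> real) \<Rightarrow> ('b::real_vector \<Rightarrow> 'b \<Rightarrow> real) \<Rightarrow> ('a \<Rightarrow> 'b) \<Rightarrow> 'a set \<Rightarrow> 'b \<Rightarrow> 'a" where
  "diamond gV gW T H X =
     restr_adjoint gV gW T H (THE X1. X1 \<in> range T \<and> (\<forall>w\<in>range T. gW (X - X1) w = 0))"

definition P_H ::
  "('a::real_vector \<Rightarrow> 'a \<Rightarrow> real) \<Rightarrow> ('b::real_vector \<Rightarrow> 'b \<Rightarrow> real) \<Rightarrow> ('a \<Rightarrow> 'b) \<Rightarrow> 'a set \<Rightarrow> 'a \<Rightarrow> 'a" where
  "P_H gV gW T H = diamond gV gW T H \<circ> T"

text \<open>Points of M: the set M; tangent spaces T_xM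
  modelled by the finite-dimensional space 'a with metric gM x; T_yN by 'b with
  metric gN y; df x is the differential at x; smooth is the smoothness predicate
  for real functions on M.\<close>
definition conformal_riemannian_morphism ::
  "(('m \<Rightarrow> real) \<Rightarrow> bool) \<Rightarrow> 'm set \<Rightarrow> ('m \<Rightarrow> 'a::real_vector \<Rightarrow> 'a \<Rightarrow> real) \<Rightarrow>
   ('n \<Rightarrow> 'b::real_vector \<Rightarrow> 'b \<Rightarrow> real) \<Rightarrow> ('m \<Rightarrow> 'n) \<Rightarrow> ('m \<Rightarrow> 'a \<Rightarrow> 'b) \<Rightarrow> bool" where
  "conformal_riemannian_morphism smooth M gM gN f df \<longleftrightarrow>
     (\<exists>\<Lambda>. smooth \<Lambda> \<and> (\<forall>x\<in>M. \<Lambda> x > 0) \<and>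
        (\<forall>x\<in>M. geometric_function (gM x) (gN (f x)) (df x) (\<Lambda> x)))"

end

theory Submission
  imports Defs
begin

text \<open>By the Riesz representation theorem on the finite-dimensional space \<open>H\<close>, the vector
  \<open>P\<^sub>H u\<close> is the unique element of \<open>H\<close> with \<open>g\<^sub>M(P\<^sub>H u, v) = g\<^sub>N(df u, df v)\<close> for all
  \<open>v \<in> H\<close>. Consequently \<open>df\<close> is conformal on \<open>H\<close> with factor \<open>r\<close> exactly when \<open>P\<^sub>H\<close> acts
  as \<open>r\<close> times the identity on \<open>H\<close>; as \<open>P\<^sub>H\<close> takes values in \<open>H\<close>, this gives
  \<open>P\<^sub>H \<circ> P\<^sub>H = r P\<^sub>H\<close>. Conversely, if \<open>P\<^sub>H \<circ> P\<^sub>H = r P\<^sub>H\<close> and \<open>u \<in> H\<close>, then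
  \<open>w = P\<^sub>H u - r u \<in> H\<close> satisfies \<open>g\<^sub>N(df w, df v) = 0\<close> for all \<open>v \<in> H\<close>, in particular for
  \<open>v = w\<close>; so \<open>w \<in> H \<inter> ker df = 0\<close>.\<close>

lemma inner_product_form_linear:
  assumes "inner_product_form g"
  shows "linear (g u)" "linear (\<lambda>v. g v w)"
  using assms unfolding inner_product_form_def bilinear_def by auto

lemma inner_product_form_simps:
  assumes "inner_product_form g"
  shows "g (x + y) w = g x w + g y w" "g w (x + y) = g w x + g w y"
    "g (x - y) w = g x w - g y w" "g w (x - y) = g w x - g w y"
    "g (c *\<^sub>R x) w = c * g x w" "g w (c *\<^sub>R x) = c * g w x"
    "g 0 w = 0" "g w 0 = 0"
  using linear_add[OF inner_product_form_linear(2)[OF assms, of w]]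
    linear_diff[OF inner_product_form_linear(2)[OF assms, of w]]
    linear_scale[OF inner_product_form_linear(2)[OF assms, of w]]
    linear_0[OF inner_product_form_linear(2)[OF assms, of w]]
    inner_product_form_linear(1)[OF assms, of w]
  by (simp_all add: linear_add linear_diff linear_scale linear_0)

lemma inner_product_form_self_eq_0_iff:
  assumes "inner_product_form g"
  shows "g v v = 0 \<longleftrightarrow> v = 0"
  using assms unfolding inner_product_form_def by (auto simp: inner_product_form_simps[OF assms])

lemma inner_product_form_eq_if_eq_on_subspace:
  assumes g: "inner_product_form g" and "subspace H" "a \<in> H" "b \<in> H"
    and "\<forall>v\<in>H. g a v = g b v"
  shows "a = b"
proof -
  have "a - b \<in> H" using assms by (simp add: subspace_diff)
  then have "g (a - b) (a - b) = 0" using assms by (simp add: inner_product_form_simps[OF g])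
  then show ?thesis using inner_product_form_self_eq_0_iff[OF g] by simp
qed

lemma inner_product_form_represent_on_subspace:
  fixes g :: "'a::euclidean_space \<Rightarrow> 'a \<Rightarrow> real"
  assumes g: "inner_product_form g" and H: "subspace H" and l: "linear l"
  shows "\<exists>a\<in>H. \<forall>v\<in>H. g a v = l v"
proof -
  obtain B where B: "B \<subseteq> H" "independent B" "span B = H"
    using basis_exists H span_subspace by metis
  have B_finite: "finite B" using B(2) by (simp add: finiteI_independent)
  have coeffs_zero: "\<forall>b\<in>B. c b = 0" if "(\<Sum>b\<in>B. c b *\<^sub>R b) = 0" for c
    using dependent_finite[OF B_finite] B(2) that by auto
  have eq_on_basis: "\<forall>v\<in>H. g a v = k v" if "\<forall>b\<in>B. g a b = k b" "linear k" for a k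
  proof -
    have "subspace {v. g a v = k v}"
      unfolding subspace_def using that(2)
      by (simp add: inner_product_form_simps[OF g] linear_add linear_scale linear_0)
    then have "span B \<subseteq> {v. g a v = k v}" using that(1) by (intro span_minimal) auto
    then show ?thesis using B(3) by auto
  qed
  define \<psi> where "\<psi> a = (\<Sum>b\<in>B. g a b *\<^sub>R b)" for a
  have \<psi>_linear: "linear \<psi>" unfolding \<psi>_def
    by (rule linearI)
      (simp_all add: inner_product_form_simps[OF g] scaleR_add_left sum.distrib scaleR_sum_right)
  have \<psi>_into: "\<psi> ` H \<subseteq> H" unfolding \<psi>_def using H B(1)
    by (auto intro!: subspace_sum subspace_scale)
  have "inj_on \<psi> H"
  proof (subst linear_inj_on_iff_eq_0[OF \<psi>_linear H], intro ballI impI)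
    fix a assume a: "a \<in> H" "\<psi> a = 0"
    then have "\<forall>b\<in>B. g a b = 0" using coeffs_zero[of "g a"] unfolding \<psi>_def by simp
    then have "g a a = 0" using eq_on_basis[of a "\<lambda>_. 0"] a(1) by (simp add: linear_zero)
    then show "a = 0" using inner_product_form_self_eq_0_iff[OF g] by simp
  qed
  then have "dim (\<psi> ` H) = dim H"
    using H by (intro dim_image_eq[OF \<psi>_linear]) (simp only: span_eq_iff[symmetric])
  then have \<psi>_onto: "\<psi> ` H = H"
    using subspace_dim_equal[OF linear_subspace_image[OF \<psi>_linear H] H \<psi>_into] by simp
  have "(\<Sum>b\<in>B. l b *\<^sub>R b) \<in> H" using H B(1) by (auto intro!: subspace_sum subspace_scale)
  then obtain a where a: "a \<in> H" "\<psi> a = (\<Sum>b\<in>B. l b *\<^sub>R b)" using \<psi>_onto by force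
  then have "(\<Sum>b\<in>B. (g a b - l b) *\<^sub>R b) = 0"
    unfolding \<psi>_def by (simp add: scaleR_diff_left sum_subtractf)
  then have "\<forall>b\<in>B. g a b = l b" using coeffs_zero[of "\<lambda>b. g a b - l b"] by simp
  then show ?thesis using eq_on_basis[OF _ l] a(1) by blast
qed

lemma restr_adjoint:
  fixes g :: "'a::euclidean_space \<Rightarrow> 'a \<Rightarrow> real" and h :: "'b::real_vector \<Rightarrow> 'b \<Rightarrow> real"
  assumes g: "inner_product_form g" and h: "inner_product_form h" and T: "linear T"
    and H: "subspace H"
  shows "restr_adjoint g h T H y \<in> H \<and> (\<forall>v\<in>H. g (restr_adjoint g h T H y) v = h y (T v))"
proof -
  have "linear (\<lambda>v. h y (T v))"
    using linear_compose[OF T inner_product_form_linear(1)[OF h]] by (simp add: o_def)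
  then obtain a where a: "a \<in> H" "\<forall>v\<in>H. g a v = h y (T v)"
    using inner_product_form_represent_on_subspace[OF g H] by blast
  have "\<exists>!a. a \<in> H \<and> (\<forall>v\<in>H. g a v = h y (T v))"
    using a inner_product_form_eq_if_eq_on_subspace[OF g H] by (metis (no_types, lifting))
  then show ?thesis unfolding restr_adjoint_def by (rule theI')
qed

lemma diamond_on_range:
  assumes h: "inner_product_form h" and T: "linear T"
  shows "diamond g h T H (T u) = restr_adjoint g h T H (T u)"
proof -
  have "(THE y. y \<in> range T \<and> (\<forall>w\<in>range T. h (T u - y) w = 0)) = T u"
  proof (rule the_equality)
    fix y assume y: "y \<in> range T \<and> (\<forall>w\<in>range T. h (T u - y) w = 0)"
    then obtain z where "y = T z" by auto
    then have "T u - y \<in> range T" using linear_diff[OF T] by (metis rangeI)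
    then have "h (T u - y) (T u - y) = 0" using y by blast
    then show "y = T u" using inner_product_form_self_eq_0_iff[OF h] by simp
  qed (simp add: inner_product_form_simps[OF h])
  then show ?thesis unfolding diamond_def by simp
qed

lemma P_H_characterization:
  fixes g :: "'a::euclidean_space \<Rightarrow> 'a \<Rightarrow> real" and h :: "'b::real_vector \<Rightarrow> 'b \<Rightarrow> real"
  assumes "inner_product_form g" "inner_product_form h" "linear T" "subspace H"
  shows P_H_in_subspace: "P_H g h T H u \<in> H"
    and P_H_inner: "v \<in> H \<Longrightarrow> g (P_H g h T H u) v = h (T u) (T v)"
  using restr_adjoint[OF assms, of "T u"] diamond_on_range[OF assms(2,3)]
  by (auto simp: P_H_def)

lemma P_H_eq_scaleR_on_subspace_if_conformal:
  fixes g :: "'a::euclidean_space \<Rightarrow> 'a \<Rightarrow> real" and h :: "'b::real_vector \<Rightarrow> 'b \<Rightarrow> real"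
  assumes g: "inner_product_form g" and h: "inner_product_form h" and T: "linear T"
    and H: "subspace H" and conformal: "\<forall>u\<in>H. \<forall>v\<in>H. h (T u) (T v) = r * g u v"
    and u: "u \<in> H"
  shows "P_H g h T H u = r *\<^sub>R u"
  using P_H_characterization[OF g h T H] conformal u H
  by (intro inner_product_form_eq_if_eq_on_subspace[OF g H])
    (auto simp: subspace_scale inner_product_form_simps[OF g])

lemma P_H_eq_scaleR_on_subspace_if_square:
  fixes g :: "'a::euclidean_space \<Rightarrow> 'a \<Rightarrow> real" and h :: "'b::real_vector \<Rightarrow> 'b \<Rightarrow> real"
  assumes g: "inner_product_form g" and h: "inner_product_form h" and T: "linear T"
    and H: "subspace H" and H_ker: "H \<inter> ker T = {0}"
    and square: "P_H g h T H \<circ> P_H g h T H = (\<lambda>v. r *\<^sub>R P_H g h T H v)"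
    and u: "u \<in> H"
  shows "P_H g h T H u = r *\<^sub>R u"
proof -
  let ?P = "P_H g h T H"
  note P = P_H_characterization[OF g h T H]
  define w where "w = ?P u - r *\<^sub>R u"
  have w: "w \<in> H" unfolding w_def using P(1) u H by (simp add: subspace_diff subspace_scale)
  have "T w = T (?P u) - r *\<^sub>R T u"
    unfolding w_def by (simp add: linear_diff[OF T] linear_scale[OF T])
  then have "h (T w) z = h (T (?P u)) z - r * h (T u) z" for z
    by (simp add: inner_product_form_simps[OF h])
  then have "h (T w) (T w) = h (T (?P u)) (T w) - r * h (T u) (T w)" .
  also have "\<dots> = g (?P (?P u)) w - r * g (?P u) w"
    using P(2) w by simp
  also have "\<dots> = 0"
    using fun_cong[OF square, of u] by (simp add: inner_product_form_simps[OF g])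
  finally have "T w = 0" using inner_product_form_self_eq_0_iff[OF h] by simp
  then have "w = 0" using w H_ker by (auto simp: ker_def)
  then show ?thesis unfolding w_def by simp
qed

lemma P_H_square_eq_scaleR_iff_conformal_on:
  fixes g :: "'a::euclidean_space \<Rightarrow> 'a \<Rightarrow> real" and h :: "'b::real_vector \<Rightarrow> 'b \<Rightarrow> real"
  assumes g: "inner_product_form g" and h: "inner_product_form h" and T: "linear T"
    and H: "subspace H" and H_ker: "H \<inter> ker T = {0}"
  shows "P_H g h T H \<circ> P_H g h T H = (\<lambda>v. r *\<^sub>R P_H g h T H v)
    \<longleftrightarrow> (\<forall>u\<in>H. \<forall>v\<in>H. h (T u) (T v) = r * g u v)"
proof
  assume "P_H g h T H \<circ> P_H g h T H = (\<lambda>v. r *\<^sub>R P_H g h T H v)"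
  then have P_u: "P_H g h T H u = r *\<^sub>R u" if "u \<in> H" for u
    using P_H_eq_scaleR_on_subspace_if_square[OF g h T H H_ker] that by blast
  show "\<forall>u\<in>H. \<forall>v\<in>H. h (T u) (T v) = r * g u v"
  proof (intro ballI)
    fix u v assume "u \<in> H" "v \<in> H"
    then have "h (T u) (T v) = g (P_H g h T H u) v" by (simp add: P_H_inner[OF g h T H])
    also have "\<dots> = r * g u v" using \<open>u \<in> H\<close> by (simp add: P_u inner_product_form_simps[OF g])
    finally show "h (T u) (T v) = r * g u v" .
  qed
next
  assume "\<forall>u\<in>H. \<forall>v\<in>H. h (T u) (T v) = r * g u v"
  then show "P_H g h T H \<circ> P_H g h T H = (\<lambda>v. r *\<^sub>R P_H g h T H v)"
    using P_H_eq_scaleR_on_subspace_if_conformal[OF g h T H] P_H_in_subspace[OF g h T H]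
    by (simp add: fun_eq_iff)
qed

lemma direct_sum_decomp_commute: "direct_sum_decomp A B \<longleftrightarrow> direct_sum_decomp B A"
proof -
  have "{a + b |a b. a \<in> A \<and> b \<in> B} = {a + b |a b. a \<in> B \<and> b \<in> A}"
    using add.commute by blast
  then show ?thesis unfolding direct_sum_decomp_def by (auto simp: Int_commute)
qed

lemma geometric_function_iff_P_H_square:
  fixes g :: "'a::euclidean_space \<Rightarrow> 'a \<Rightarrow> real" and h :: "'b::real_vector \<Rightarrow> 'b \<Rightarrow> real"
  assumes g: "inner_product_form g" and h: "inner_product_form h" and T: "linear T"
  shows "geometric_function g h T r \<longleftrightarrow> r > 0 \<and> (\<exists>H. direct_sum_decomp H (ker T) \<and>
    P_H g h T H \<circ> P_H g h T H = (\<lambda>v. r *\<^sub>R P_H g h T H v))"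
proof -
  have "P_H g h T H \<circ> P_H g h T H = (\<lambda>v. r *\<^sub>R P_H g h T H v)
      \<longleftrightarrow> (\<forall>u\<in>H. \<forall>v\<in>H. h (T u) (T v) = r * g u v)" if "direct_sum_decomp H (ker T)" for H
    using that P_H_square_eq_scaleR_iff_conformal_on[OF g h T]
    unfolding direct_sum_decomp_def by blast
  then show ?thesis
    unfolding geometric_function_def using T direct_sum_decomp_commute by blast
qed

theorem mainTheorem3:
  fixes smooth :: "('m \<Rightarrow> real) \<Rightarrow> bool"
    and M :: "'m set"
    and gM :: "'m \<Rightarrow> 'a::euclidean_space \<Rightarrow> 'a \<Rightarrow> real"
    and gN :: "'n \<Rightarrow> 'b::euclidean_space \<Rightarrow> 'b \<Rightarrow> real"
    and f :: "'m \<Rightarrow> 'n"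
    and df :: "'m \<Rightarrow> 'a \<Rightarrow> 'b"
  assumes gM_ip: "\<And>x. x \<in> M \<Longrightarrow> inner_product_form (gM x)"
    and gN_ip: "\<And>y. inner_product_form (gN y)"
    and df_lin: "\<And>x. x \<in> M \<Longrightarrow> linear (df x)"
  shows "conformal_riemannian_morphism smooth M gM gN f df \<longleftrightarrow>
    (\<exists>\<Lambda>. smooth \<Lambda> \<and> (\<forall>x\<in>M. \<Lambda> x > 0) \<and>
       (\<forall>x\<in>M. \<exists>H. direct_sum_decomp H (ker (df x)) \<and>
          P_H (gM x) (gN (f x)) (df x) H \<circ> P_H (gM x) (gN (f x)) (df x) H
            = (\<lambda>v. \<Lambda> x *\<^sub>R P_H (gM x) (gN (f x)) (df x) H v)))"
  using geometric_function_iff_P_H_square[OF gM_ip gN_ip df_lin]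
  unfolding conformal_riemannian_morphism_def by (metis (no_types, lifting))

end
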